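(* Let $G$ be a loop-tangle graph and let $R$ be the disc bounded by the loop, containing the tangle graph. For each positive integer $N$ let $f_N$ be the number of $N$-sided faces of $G$ in $R$. Then \[3f_1 + 2f_2 + f_3 = 3 + \sum_{n=1}^{\infty} n f_{n+4}.\]
   Context: In an oriented knot diagram, a loop is a subarc $\gamma^\dagger$ of the knot such that (1) $\gamma^\dagger$ has exactly one self-crossing $u$, forming a loop bounding a disc $R$; (2) apart from $u$, at every crossing $\gamma^\dagger$ meets, $\gamma^\dagger$ is the under-strand (or at every such crossing it is the over-strand); (3) the two edges incident to $u$ not on the loop lie outside $R$. The tangle consists of the arcs of the knot inside $R$, each crossing the loop transversally at its two endpoints. The loop-tangle graph is obtained from the loop together with the tangle by forgetting over/under information: its vertices are the self-crossing $u$, the crossings of tangle arcs with the loop, and the crossings of the tangle inside $R$, each of degree $4$; it also contains the outward edges (sprouts) leaving the loop, each attached to a single vertex on the loop. An $N$-sided face is a face of this graph inside $R$ whose boundary consists of $N$ edges. *)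

theory Defs
  imports Complex_Main
begin

text \<open>A map is a finite set of darts D with a
fixed-point-free involution alpha (edges) and a permutation sigma (cyclic order of darts
around each vertex).\<close>

definition orb :: "('d \<Rightarrow> 'd) \<Rightarrow> 'd \<Rightarrow> 'd set" where
  "orb f d = range (\<lambda>n. (f ^^ n) d)"

definition is_map :: "'d set \<Rightarrow> ('d \<Rightarrow> 'd) \<Rightarrow> ('d \<Rightarrow> 'd) \<Rightarrow> bool" where
  "is_map D \<alpha> \<sigma> \<longleftrightarrow> finite D \<and> bij_betw \<alpha> D D \<and> bij_betw \<sigma> D D \<and>
     (\<forall>d\<in>D. \<alpha> d \<noteq> d \<and> \<alpha> (\<alpha> d) = d)"

definition map_vertices :: "'d set \<Rightarrow> ('d \<Rightarrow> 'd) \<Rightarrow> ('d \<Rightarrow> 'd) \<Rightarrow> 'd set set" where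
  "map_vertices D \<alpha> \<sigma> = orb \<sigma> ` D"

definition map_edges :: "'d set \<Rightarrow> ('d \<Rightarrow> 'd) \<Rightarrow> ('d \<Rightarrow> 'd) \<Rightarrow> 'd set set" where
  "map_edges D \<alpha> \<sigma> = orb \<alpha> ` D"

definition map_faces :: "'d set \<Rightarrow> ('d \<Rightarrow> 'd) \<Rightarrow> ('d \<Rightarrow> 'd) \<Rightarrow> 'd set set" where
  "map_faces D \<alpha> \<sigma> = orb (\<sigma> \<circ> \<alpha>) ` D"

definition map_connected :: "'d set \<Rightarrow> ('d \<Rightarrow> 'd) \<Rightarrow> ('d \<Rightarrow> 'd) \<Rightarrow> bool" where
  "map_connected D \<alpha> \<sigma> \<longleftrightarrow>
     (\<forall>d\<in>D. \<forall>e\<in>D. (d, e) \<in> {(x, y). x \<in> D \<and> (y = \<alpha> x \<or> y = \<sigma> x)}\<^sup>*)"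

definition planar_map :: "'d set \<Rightarrow> ('d \<Rightarrow> 'd) \<Rightarrow> ('d \<Rightarrow> 'd) \<Rightarrow> bool" where
  "planar_map D \<alpha> \<sigma> \<longleftrightarrow> is_map D \<alpha> \<sigma> \<and> map_connected D \<alpha> \<sigma> \<and>
     int (card (map_vertices D \<alpha> \<sigma>)) - int (card (map_edges D \<alpha> \<sigma>))
       + int (card (map_faces D \<alpha> \<sigma>)) = 2"

text \<open>Sprout darts: the darts (at loop vertices) of the outward edges. The sprouts are
modelled as pendant edges ending in a leaf (a vertex of degree 1). \<open>ls\<close> lists the darts
of the loop edges in order along the loop, starting at the self-crossing u;
p and q are the darts at u of the two sprouts at u.\<close>

definition sprout_darts :: "('d \<Rightarrow> 'd) \<Rightarrow> 'd list \<Rightarrow> 'd \<Rightarrow> 'd \<Rightarrow> 'd set" where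
  "sprout_darts \<sigma> ls p q = {p, q} \<union> {\<sigma> (ls ! i) | i. 1 \<le> i \<and> i < length ls}"

definition loop_tangle_map ::
  "'d set \<Rightarrow> ('d \<Rightarrow> 'd) \<Rightarrow> ('d \<Rightarrow> 'd) \<Rightarrow> 'd list \<Rightarrow> 'd \<Rightarrow> 'd \<Rightarrow> bool" where
  "loop_tangle_map D \<alpha> \<sigma> ls p q \<longleftrightarrow>
     planar_map D \<alpha> \<sigma> \<and>
     ls \<noteq> [] \<and> set ls \<subseteq> D \<and> p \<in> D \<and> q \<in> D \<and>
     \<comment> \<open>every vertex is a 4-valent crossing or a leaf (free end of a sprout)\<close>
     (\<forall>d\<in>D. card (orb \<sigma> d) = 1 \<or> card (orb \<sigma> d) = 4) \<and>
     \<comment> \<open>the self-crossing u: the loop leaves along hd ls and returns along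
         alpha (last ls); these are adjacent (on the side of R); the other two
         edges at u are sprouts p, q lying outside R\<close>
     distinct [\<alpha> (last ls), hd ls, p, q] \<and>
     \<sigma> (\<alpha> (last ls)) = hd ls \<and> \<sigma> (hd ls) = p \<and> \<sigma> p = q \<and> \<sigma> q = \<alpha> (last ls) \<and>
     \<sigma> (\<alpha> p) = \<alpha> p \<and> \<sigma> (\<alpha> q) = \<alpha> q \<and>
     \<comment> \<open>the other loop vertices: the loop crosses straight through; one further
         edge goes into R (tangle), the other is a sprout going out\<close>
     (\<forall>i. 1 \<le> i \<and> i < length ls \<longrightarrow>
        (let a = \<alpha> (ls ! (i - 1)) in
          distinct [a, \<sigma> a, \<sigma> (\<sigma> a), \<sigma> (\<sigma> (\<sigma> a))] \<and>
          \<sigma> (\<sigma> a) = ls ! i \<and> \<sigma> (\<sigma> (\<sigma> (\<sigma> a))) = a \<and>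
          \<sigma> (\<alpha> (\<sigma> (ls ! i))) = \<alpha> (\<sigma> (ls ! i)))) \<and>
     \<comment> \<open>the loop has only one self-crossing: its vertices are pairwise distinct\<close>
     (\<forall>i < length ls. \<forall>j < length ls. i \<noteq> j \<longrightarrow> ls ! j \<notin> orb \<sigma> (ls ! i)) \<and>
     \<comment> \<open>the only leaves are the free ends of the sprouts\<close>
     (\<forall>d\<in>D. \<sigma> d = d \<longrightarrow> \<alpha> d \<in> sprout_darts \<sigma> ls p q)"

text \<open>Faces inside the disc R: all faces not containing a sprout dart (the unique
face containing the sprouts is the exterior of R). The number of N-sided faces in R.\<close>

definition faces_in_R :: "'d set \<Rightarrow> ('d \<Rightarrow> 'd) \<Rightarrow> ('d \<Rightarrow> 'd) \<Rightarrow> 'd list \<Rightarrow> 'd \<Rightarrow> 'd \<Rightarrow> 'd set set" where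
  "faces_in_R D \<alpha> \<sigma> ls p q =
     {F \<in> map_faces D \<alpha> \<sigma>. F \<inter> sprout_darts \<sigma> ls p q = {}}"

definition nsided_faces :: "'d set \<Rightarrow> ('d \<Rightarrow> 'd) \<Rightarrow> ('d \<Rightarrow> 'd) \<Rightarrow> 'd list \<Rightarrow> 'd \<Rightarrow> 'd \<Rightarrow> nat \<Rightarrow> nat" where
  "nsided_faces D \<alpha> \<sigma> ls p q N = card {F \<in> faces_in_R D \<alpha> \<sigma> ls p q. card F = N}"

end

theory Submission
  imports Defs
begin

(* The proof rests on Euler's formula V - E + F = 2 for the planar map. Counting darts
   gives 2E = |D|, and since every vertex is a crossing of degree 4 or a leaf,
   4V = |D| + 3L, where the L leaves are the free ends of the k + 1 sprouts (k being the
   number of loop edges). The face that contains the sprouts is the exterior of R; walking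
   around it passes every sprout on both sides and every loop edge once, so it has 3k + 2
   darts. Hence the faces inside R satisfy sum (4 - |F|) = 4 + (3k + 2) - 3(k + 1) = 3,
   and grouping this sum by face size gives 3 f_1 + 2 f_2 + f_3 - sum_n n f_(n+4) = 3. *)

section \<open>Orbits of a bijection of a finite set\<close>

lemma orb_iff: "y \<in> orb f x \<longleftrightarrow> (\<exists>n. y = (f ^^ n) x)"
  unfolding orb_def by auto

lemma self_in_orb: "x \<in> orb f x"
  unfolding orb_iff by (metis funpow_0)

lemma orb_step: "y \<in> orb f x \<Longrightarrow> f y \<in> orb f x"
  unfolding orb_iff by (metis comp_apply funpow.simps(2))

lemma orb_trans:
  assumes "y \<in> orb f x"
  shows "orb f y \<subseteq> orb f x"
proof
  fix z
  assume "z \<in> orb f y"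
  then obtain m where z: "z = (f ^^ m) y"
    unfolding orb_iff by blast
  obtain n where "y = (f ^^ n) x"
    using assms unfolding orb_iff by blast
  then have "z = (f ^^ (m + n)) x"
    by (simp add: z funpow_add)
  then show "z \<in> orb f x"
    unfolding orb_iff by blast
qed

lemma orb_fixpoint:
  assumes "f x = x"
  shows "orb f x = {x}"
proof -
  have "(f ^^ n) x = x" for n
    by (induction n) (simp_all add: assms)
  then show ?thesis
    unfolding orb_def by auto
qed

lemma orb_involution: "f (f x) = x \<Longrightarrow> orb f x = {x, f x}"
proof -
  assume inv: "f (f x) = x"
  have "(f ^^ n) x \<in> {x, f x}" for n
    by (induction n) (auto simp: inv)
  then have "orb f x \<subseteq> {x, f x}"
    unfolding orb_def by blast
  moreover have "x \<in> orb f x" "f x \<in> orb f x"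
    by (rule self_in_orb, rule orb_step, rule self_in_orb)
  ultimately show ?thesis
    by blast
qed

lemma card_orb_eq_1_iff:
  "card (orb f d) = 1 \<longleftrightarrow> f d = d"
proof
  assume "card (orb f d) = 1"
  then obtain x where "orb f d = {x}"
    using card_1_singletonE by blast
  then show "f d = d"
    using self_in_orb[of d f] orb_step[OF self_in_orb, of f d] by simp
qed (simp add: orb_fixpoint)

context
  fixes D :: "'a set" and f :: "'a \<Rightarrow> 'a"
  assumes fin: "finite D" and bij: "bij_betw f D D"
begin

lemma orb_subset: "x \<in> D \<Longrightarrow> orb f x \<subseteq> D"
  unfolding orb_def using bij_betwE[OF bij_betw_funpow[OF bij]] by blast

lemma funpow_period:
  assumes "x \<in> D"
  obtains m where "m > 0" "(f ^^ m) x = x"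
proof -
  have "finite (range (\<lambda>n. (f ^^ n) x))"
    using finite_subset[OF orb_subset[OF assms] fin] unfolding orb_def .
  then have "\<not> inj (\<lambda>n. (f ^^ n) x)"
    using finite_imageD[of "\<lambda>n. (f ^^ n) x" UNIV] by auto
  then obtain i' j' where "i' \<noteq> j'" "(f ^^ i') x = (f ^^ j') x"
    unfolding inj_def by blast
  then obtain i j where ij: "i < j" "(f ^^ i) x = (f ^^ j) x"
    by (metis linorder_neqE_nat)
  have "(f ^^ j) x = (f ^^ (i + (j - i))) x"
    using ij(1) by simp
  also have "\<dots> = (f ^^ i) ((f ^^ (j - i)) x)"
    by (simp add: funpow_add)
  finally have "(f ^^ i) x = (f ^^ i) ((f ^^ (j - i)) x)"
    using ij(2) by simp
  moreover have "(f ^^ (j - i)) x \<in> D"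
    using bij_betwE[OF bij_betw_funpow[OF bij]] assms by blast
  ultimately have "(f ^^ (j - i)) x = x"
    using inj_onD[OF bij_betw_imp_inj_on[OF bij_betw_funpow[OF bij]]] assms by metis
  with ij(1) show thesis
    using that[of "j - i"] by simp
qed

lemma orb_sym:
  assumes "x \<in> D" "y \<in> orb f x"
  shows "x \<in> orb f y"
proof -
  obtain m where m: "m > 0" "(f ^^ m) x = x"
    using funpow_period[OF assms(1)] .
  obtain n where n: "y = (f ^^ n) x"
    using assms(2) unfolding orb_iff by blast
  have "n \<le> m * n"
    using m(1) by simp
  have "(f ^^ (m * n - n)) y = (f ^^ (m * n - n + n)) x"
    by (simp add: n funpow_add)
  also have "\<dots> = (f ^^ (m * n)) x"
    using \<open>n \<le> m * n\<close> by simp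
  also have "\<dots> = x"
    using funpow_mod_eq[where m = "m * n", OF m(2)] by simp
  finally have "x = (f ^^ (m * n - n)) y"
    by (rule sym)
  then show ?thesis
    unfolding orb_iff by (rule exI)
qed

lemma orb_eq:
  assumes "x \<in> D" "y \<in> orb f x"
  shows "orb f y = orb f x"
  using orb_trans[OF assms(2)] orb_trans[OF orb_sym[OF assms]] by (rule equalityI)

lemma orbs_disjoint:
  assumes "x \<in> D" "y \<in> D" "orb f x \<noteq> orb f y"
  shows "orb f x \<inter> orb f y = {}"
proof (rule ccontr)
  assume "orb f x \<inter> orb f y \<noteq> {}"
  then obtain z where "z \<in> orb f x" "z \<in> orb f y"
    by blast
  then have "orb f z = orb f x" "orb f z = orb f y"
    using orb_eq assms(1,2) by blast+
  with assms(3) show False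
    by simp
qed

lemma sum_card_orbs: "(\<Sum>X\<in>orb f ` D. card X) = card D"
proof -
  have "pairwise disjnt (orb f ` D)"
    by (intro pairwise_imageI) (simp add: disjnt_def orbs_disjoint)
  moreover have "finite X" if "X \<in> orb f ` D" for X
    using that by (auto intro: finite_subset[OF orb_subset fin])
  ultimately have "card (\<Union> (orb f ` D)) = (\<Sum>X\<in>orb f ` D. card X)"
    by (rule card_Union_disjoint)
  moreover have "\<Union> (orb f ` D) = D"
  proof
    show "\<Union> (orb f ` D) \<subseteq> D"
      using orb_subset by blast
    show "D \<subseteq> \<Union> (orb f ` D)"
      using self_in_orb[of _ f] by blast
  qed
  ultimately show ?thesis
    by simp
qed

end

lemma funpow_less_4:
  assumes "m < 4"
  shows "(f ^^ m) x = [x, f x, f (f x), f (f (f x))] ! m"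
proof -
  have "m = 0 \<or> m = 1 \<or> m = 2 \<or> m = 3"
    using assms by linarith
  then show ?thesis
    by (auto simp: numeral_eq_Suc)
qed

section \<open>Planar maps with vertices of degree 1 and 4\<close>

lemma is_mapD:
  assumes "is_map D \<alpha> \<sigma>"
  shows "finite D" "bij_betw \<alpha> D D" "bij_betw \<sigma> D D"
    and "\<And>d. d \<in> D \<Longrightarrow> \<alpha> d \<noteq> d" "\<And>d. d \<in> D \<Longrightarrow> \<alpha> (\<alpha> d) = d"
  using assms unfolding is_map_def by auto

lemma card_map_edges:
  assumes "is_map D \<alpha> \<sigma>"
  shows "2 * card (map_edges D \<alpha> \<sigma>) = card D"
proof -
  have "card e = 2" if e: "e \<in> map_edges D \<alpha> \<sigma>" for e
  proof -
    obtain d where "d \<in> D" "e = orb \<alpha> d"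
      using e unfolding map_edges_def by blast
    then show ?thesis
      using orb_involution[of \<alpha> d] is_mapD(4,5)[OF assms \<open>d \<in> D\<close>] by auto
  qed
  then have "(\<Sum>e\<in>map_edges D \<alpha> \<sigma>. card e) = 2 * card (map_edges D \<alpha> \<sigma>)"
    by simp
  moreover have "(\<Sum>e\<in>map_edges D \<alpha> \<sigma>. card e) = card D"
    unfolding map_edges_def using sum_card_orbs is_mapD(1,2)[OF assms] .
  ultimately show ?thesis
    by simp
qed

lemma bij_betw_face_permutation:
  assumes "is_map D \<alpha> \<sigma>"
  shows "bij_betw (\<sigma> \<circ> \<alpha>) D D"
  using bij_betw_trans is_mapD(2,3)[OF assms] .

lemma sum_card_map_faces:
  assumes "is_map D \<alpha> \<sigma>"
  shows "(\<Sum>F\<in>map_faces D \<alpha> \<sigma>. card F) = card D"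
  unfolding map_faces_def
  using sum_card_orbs is_mapD(1)[OF assms] bij_betw_face_permutation[OF assms] .

lemma card_map_face_nonzero:
  assumes "is_map D \<alpha> \<sigma>" "F \<in> map_faces D \<alpha> \<sigma>"
  shows "card F \<noteq> 0"
proof -
  obtain d where d: "d \<in> D" "F = orb (\<sigma> \<circ> \<alpha>) d"
    using assms(2) unfolding map_faces_def by blast
  then have "finite F"
    using finite_subset[OF orb_subset[OF is_mapD(1) bij_betw_face_permutation] is_mapD(1)] assms(1)
    by simp
  moreover have "d \<in> F"
    using d(2) self_in_orb by simp
  ultimately show ?thesis
    by auto
qed

lemma card_map_vertices_of_degree_1:
  "card {v \<in> map_vertices D \<alpha> \<sigma>. card v = 1} = card {d \<in> D. \<sigma> d = d}"
proof -
  let ?L = "{d \<in> D. \<sigma> d = d}"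
  have V1: "{v \<in> map_vertices D \<alpha> \<sigma>. card v = 1} = orb \<sigma> ` ?L"
  proof (intro equalityI subsetI)
    fix v
    assume "v \<in> {v \<in> map_vertices D \<alpha> \<sigma>. card v = 1}"
    then obtain d where "d \<in> D" "v = orb \<sigma> d" "card (orb \<sigma> d) = 1"
      unfolding map_vertices_def by blast
    then show "v \<in> orb \<sigma> ` ?L"
      using card_orb_eq_1_iff[of \<sigma> d] by blast
  next
    fix v
    assume "v \<in> orb \<sigma> ` ?L"
    then show "v \<in> {v \<in> map_vertices D \<alpha> \<sigma>. card v = 1}"
      unfolding map_vertices_def using card_orb_eq_1_iff[of \<sigma>] by blast
  qed
  have "inj_on (orb \<sigma>) ?L"
    by (rule inj_onI) (simp add: orb_fixpoint)
  then show ?thesis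
    unfolding V1 by (rule card_image)
qed

lemma card_map_vertices_of_degrees_1_4:
  assumes "is_map D \<alpha> \<sigma>"
    and degrees: "\<And>d. d \<in> D \<Longrightarrow> card (orb \<sigma> d) = 1 \<or> card (orb \<sigma> d) = 4"
  shows "4 * card (map_vertices D \<alpha> \<sigma>) = card D + 3 * card {d \<in> D. \<sigma> d = d}"
proof -
  let ?V = "map_vertices D \<alpha> \<sigma>"
  let ?V1 = "{v \<in> ?V. card v = 1}"
  have "finite ?V"
    unfolding map_vertices_def using is_mapD(1)[OF assms(1)] by simp
  have "card v = 4" if "v \<in> ?V - ?V1" for v
    using that degrees unfolding map_vertices_def by auto
  then have "(\<Sum>v\<in>?V - ?V1. card v) = (\<Sum>v\<in>?V - ?V1. 4)"
    by (rule sum.cong[OF refl])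
  then have "(\<Sum>v\<in>?V - ?V1. card v) = 4 * card (?V - ?V1)"
    by simp
  moreover have "(\<Sum>v\<in>?V1. card v) = card ?V1"
    by simp
  moreover have "(\<Sum>v\<in>?V. card v) = (\<Sum>v\<in>?V - ?V1. card v) + (\<Sum>v\<in>?V1. card v)"
    using \<open>finite ?V\<close> by (intro sum.subset_diff) auto
  moreover have "(\<Sum>v\<in>?V. card v) = card D"
    unfolding map_vertices_def using sum_card_orbs is_mapD(1,3)[OF assms(1)] .
  moreover have "card ?V = card (?V - ?V1) + card ?V1"
  proof -
    have sub: "?V1 \<subseteq> ?V"
      by blast
    have "card (?V - ?V1) = card ?V - card ?V1"
      using card_Diff_subset[OF finite_subset[OF sub \<open>finite ?V\<close>] sub] .
    moreover have "card ?V1 \<le> card ?V"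
      using card_mono[OF \<open>finite ?V\<close> sub] .
    ultimately show ?thesis
      by simp
  qed
  ultimately show ?thesis
    using card_map_vertices_of_degree_1[of D \<alpha> \<sigma>] by linarith
qed

lemma planar_map_sum_four_minus_face_sizes:
  assumes planar: "planar_map D \<alpha> \<sigma>"
    and degrees: "\<And>d. d \<in> D \<Longrightarrow> card (orb \<sigma> d) = 1 \<or> card (orb \<sigma> d) = 4"
    and "F\<^sub>0 \<in> map_faces D \<alpha> \<sigma>"
  shows "(\<Sum>F\<in>map_faces D \<alpha> \<sigma> - {F\<^sub>0}. 4 - real (card F))
           = 4 + real (card F\<^sub>0) - 3 * real (card {d \<in> D. \<sigma> d = d})"
proof -
  let ?F = "map_faces D \<alpha> \<sigma>"
  have is_map: "is_map D \<alpha> \<sigma>"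
    using planar unfolding planar_map_def by blast
  have "finite ?F"
    unfolding map_faces_def using is_mapD(1)[OF is_map] by simp
  have "(\<Sum>F\<in>?F - {F\<^sub>0}. 4 - real (card F)) = 4 * real (card (?F - {F\<^sub>0})) - real (\<Sum>F\<in>?F - {F\<^sub>0}. card F)"
    by (simp add: sum_subtractf)
  moreover have "card (?F - {F\<^sub>0}) + 1 = card ?F"
    using card_Suc_Diff1[OF \<open>finite ?F\<close> assms(3)] by simp
  moreover have "card F\<^sub>0 + (\<Sum>F\<in>?F - {F\<^sub>0}. card F) = card D"
    using sum_card_map_faces[OF is_map] sum.remove[OF \<open>finite ?F\<close> assms(3), of card] by simp
  moreover have "int (card (map_vertices D \<alpha> \<sigma>)) - int (card (map_edges D \<alpha> \<sigma>)) + int (card ?F) = 2"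
    using planar unfolding planar_map_def by blast
  moreover note card_map_edges[OF is_map] card_map_vertices_of_degrees_1_4[OF is_map degrees]
  ultimately show ?thesis
    by linarith
qed

lemma sums_card_fibres:
  fixes c :: "'a \<Rightarrow> nat" and h :: "nat \<Rightarrow> real"
  assumes "finite A"
  shows "(\<lambda>N. h N * real (card {F \<in> A. c F = N})) sums (\<Sum>F\<in>A. h (c F))"
proof -
  have "(\<Sum>F\<in>A. h (c F)) = (\<Sum>N\<in>c ` A. h N * real (card {F \<in> A. c F = N}))"
    using sum.image_gen[OF assms, of "\<lambda>F. h (c F)" c] by (simp add: mult.commute)
  moreover have "(\<lambda>N. h N * real (card {F \<in> A. c F = N})) sums
      (\<Sum>N\<in>c ` A. h N * real (card {F \<in> A. c F = N}))"
  proof (rule sums_finite)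
    fix N
    assume "N \<notin> c ` A"
    then have empty: "{F \<in> A. c F = N} = {}"
      by auto
    show "h N * real (card {F \<in> A. c F = N}) = 0"
      unfolding empty by simp
  qed (use assms in simp)
  ultimately show ?thesis
    by simp
qed

lemma sum_four_minus_eq_series:
  fixes A :: "'a set" and c :: "'a \<Rightarrow> nat"
  assumes "finite A" and "\<And>F. F \<in> A \<Longrightarrow> c F \<noteq> 0"
  defines "f \<equiv> \<lambda>N. real (card {F \<in> A. c F = N})"
  shows "(\<Sum>F\<in>A. 4 - real (c F)) = 3 * f 1 + 2 * f 2 + f 3 - (\<Sum>n. real (n + 1) * f (n + 1 + 4))"
proof -
  define g where "g N = (real N - 4) * f N" for N
  have "g sums (\<Sum>F\<in>A. real (c F) - 4)"
    unfolding g_def f_def by (rule sums_card_fibres[OF assms(1)])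
  then have "(\<lambda>n. g (n + 5)) sums ((\<Sum>F\<in>A. real (c F) - 4) - (\<Sum>N<5. g N))"
    by (rule sums_split_initial_segment)
  moreover have "g (n + 5) = real (n + 1) * f (n + 1 + 4)" for n
    unfolding g_def by (simp add: add.commute)
  moreover have "(\<Sum>N<5. g N) = - (3 * f 1 + 2 * f 2 + f 3)"
  proof -
    have empty: "{F \<in> A. c F = 0} = {}"
      using assms(2) by auto
    have "f 0 = 0"
      unfolding f_def empty by simp
    then show ?thesis
      by (simp add: g_def numeral_eq_Suc)
  qed
  ultimately have "(\<Sum>n. real (n + 1) * f (n + 1 + 4)) = (\<Sum>F\<in>A. real (c F) - 4) + (3 * f 1 + 2 * f 2 + f 3)"
    using sums_unique by fastforce
  moreover have "(\<Sum>F\<in>A. 4 - real (c F)) = - (\<Sum>F\<in>A. real (c F) - 4)"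
    by (simp add: sum_negf[symmetric])
  ultimately show ?thesis
    by simp
qed

section \<open>Loop-tangle maps\<close>

locale loop_tangle =
  fixes D :: "'d set" and \<alpha> \<sigma> :: "'d \<Rightarrow> 'd" and ls :: "'d list" and p q :: 'd
  assumes loop_tangle_map: "loop_tangle_map D \<alpha> \<sigma> ls p q"
begin

abbreviation "sprouts \<equiv> sprout_darts \<sigma> ls p q"

lemma planar: "planar_map D \<alpha> \<sigma>"
  using loop_tangle_map unfolding loop_tangle_map_def by blast

lemma is_map: "is_map D \<alpha> \<sigma>"
  using planar unfolding planar_map_def by blast

lemmas finite_darts = is_mapD(1)[OF is_map]
  and bij_\<alpha> = is_mapD(2)[OF is_map]
  and bij_\<sigma> = is_mapD(3)[OF is_map]
  and \<alpha>_\<alpha> = is_mapD(5)[OF is_map]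

lemma ls_nonempty: "ls \<noteq> []"
  and ls_subset: "set ls \<subseteq> D"
  and p_in: "p \<in> D"
  and q_in: "q \<in> D"
  using loop_tangle_map unfolding loop_tangle_map_def by blast+

lemma degrees: "d \<in> D \<Longrightarrow> card (orb \<sigma> d) = 1 \<or> card (orb \<sigma> d) = 4"
  using loop_tangle_map unfolding loop_tangle_map_def by blast

lemma self_crossing:
  "distinct [\<alpha> (last ls), hd ls, p, q]"
  "\<sigma> (\<alpha> (last ls)) = hd ls" "\<sigma> (hd ls) = p" "\<sigma> p = q" "\<sigma> q = \<alpha> (last ls)"
  "\<sigma> (\<alpha> p) = \<alpha> p" "\<sigma> (\<alpha> q) = \<alpha> q"
  using loop_tangle_map unfolding loop_tangle_map_def by blast+

lemma crossing_on_loop: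
  assumes "1 \<le> i" "i < length ls"
  defines "a \<equiv> \<alpha> (ls ! (i - 1))"
  shows "distinct [a, \<sigma> a, \<sigma> (\<sigma> a), \<sigma> (\<sigma> (\<sigma> a))]"
    and "\<sigma> (\<sigma> a) = ls ! i" "\<sigma> (\<sigma> (\<sigma> (\<sigma> a))) = a"
    and "\<sigma> (\<alpha> (\<sigma> (ls ! i))) = \<alpha> (\<sigma> (ls ! i))"
proof -
  have "\<forall>i. 1 \<le> i \<and> i < length ls \<longrightarrow>
        (let a = \<alpha> (ls ! (i - 1)) in
          distinct [a, \<sigma> a, \<sigma> (\<sigma> a), \<sigma> (\<sigma> (\<sigma> a))] \<and>
          \<sigma> (\<sigma> a) = ls ! i \<and> \<sigma> (\<sigma> (\<sigma> (\<sigma> a))) = a \<and>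
          \<sigma> (\<alpha> (\<sigma> (ls ! i))) = \<alpha> (\<sigma> (ls ! i)))"
    using loop_tangle_map unfolding loop_tangle_map_def by blast
  then show "distinct [a, \<sigma> a, \<sigma> (\<sigma> a), \<sigma> (\<sigma> (\<sigma> a))]"
    and "\<sigma> (\<sigma> a) = ls ! i" "\<sigma> (\<sigma> (\<sigma> (\<sigma> a))) = a"
    and "\<sigma> (\<alpha> (\<sigma> (ls ! i))) = \<alpha> (\<sigma> (ls ! i))"
    using assms(1,2) unfolding a_def Let_def by blast+
qed

lemma loop_vertices_distinct:
  "i < length ls \<Longrightarrow> j < length ls \<Longrightarrow> i \<noteq> j \<Longrightarrow> ls ! j \<notin> orb \<sigma> (ls ! i)"
  using loop_tangle_map unfolding loop_tangle_map_def by blast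

lemma leaf_sprout: "d \<in> D \<Longrightarrow> \<sigma> d = d \<Longrightarrow> \<alpha> d \<in> sprouts"
  using loop_tangle_map unfolding loop_tangle_map_def by blast

lemma ls_nth_in: "i < length ls \<Longrightarrow> ls ! i \<in> D"
  using ls_subset nth_mem by blast

lemma p_eq: "p = \<sigma> (ls ! 0)"
  using self_crossing(3) ls_nonempty by (simp add: hd_conv_nth)

lemma \<alpha>_last_eq: "\<alpha> (ls ! (length ls - 1)) = \<sigma> (\<sigma> (\<sigma> (ls ! 0)))"
  using self_crossing(3-5) ls_nonempty by (simp add: hd_conv_nth last_conv_nth)

lemma \<sigma>_\<sigma>_nth:
  "1 \<le> i \<Longrightarrow> i < length ls \<Longrightarrow> \<sigma> (\<sigma> (ls ! i)) = \<alpha> (ls ! (i - 1))"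
  using crossing_on_loop(2,3) by metis

lemma crossing_rotation:
  assumes "i < length ls"
  shows "distinct [ls ! i, \<sigma> (ls ! i), \<sigma> (\<sigma> (ls ! i)), \<sigma> (\<sigma> (\<sigma> (ls ! i)))]"
    and "\<sigma> (\<sigma> (\<sigma> (\<sigma> (ls ! i)))) = ls ! i"
proof -
  have "distinct [ls ! i, \<sigma> (ls ! i), \<sigma> (\<sigma> (ls ! i)), \<sigma> (\<sigma> (\<sigma> (ls ! i)))] \<and>
        \<sigma> (\<sigma> (\<sigma> (\<sigma> (ls ! i)))) = ls ! i"
  proof (cases "i = 0")
    case True
    then show ?thesis
      using self_crossing(1-5) ls_nonempty by (auto simp: hd_conv_nth)
  next
    case False
    then have "1 \<le> i"
      by simp
    then show ?thesis
      using crossing_on_loop(1-3)[OF _ assms] by auto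
  qed
  then show "distinct [ls ! i, \<sigma> (ls ! i), \<sigma> (\<sigma> (ls ! i)), \<sigma> (\<sigma> (\<sigma> (ls ! i)))]"
    and "\<sigma> (\<sigma> (\<sigma> (\<sigma> (ls ! i)))) = ls ! i"
    by blast+
qed

(* Every dart at a vertex of the loop is some loop_dart (i, m), and loop_dart is injective:
   this turns counting the darts on the loop side of the outer face into counting index pairs. *)
definition loop_dart :: "nat \<times> nat \<Rightarrow> 'd" where
  "loop_dart = (\<lambda>(i, m). (\<sigma> ^^ m) (ls ! i))"

lemma loop_dart_apply [simp]: "loop_dart (i, m) = (\<sigma> ^^ m) (ls ! i)"
  unfolding loop_dart_def by simp

lemma inj_on_loop_dart: "inj_on loop_dart ({..<length ls} \<times> {..<4})"
proof (rule inj_onI, clarify)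
  fix i m j m'
  assume i: "i < length ls" and j: "j < length ls" and "m < 4" "m' < 4"
    and eq: "loop_dart (i, m) = loop_dart (j, m')"
  have z: "(\<sigma> ^^ m) (ls ! i) = (\<sigma> ^^ m') (ls ! j)"
    using eq by simp
  have in_i: "(\<sigma> ^^ m) (ls ! i) \<in> orb \<sigma> (ls ! i)" and in_j: "(\<sigma> ^^ m') (ls ! j) \<in> orb \<sigma> (ls ! j)"
    unfolding orb_iff by blast+
  have "orb \<sigma> (ls ! i) = orb \<sigma> ((\<sigma> ^^ m) (ls ! i))"
    using orb_eq[OF finite_darts bij_\<sigma> ls_nth_in[OF i] in_i] by simp
  also have "\<dots> = orb \<sigma> (ls ! j)"
    using orb_eq[OF finite_darts bij_\<sigma> ls_nth_in[OF j] in_j] z by simp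
  finally have "orb \<sigma> (ls ! i) = orb \<sigma> (ls ! j)" .
  then have "i = j"
    using loop_vertices_distinct[OF i j] self_in_orb[of "ls ! j" \<sigma>] by auto
  moreover have "m = m'"
    using eq crossing_rotation(1)[OF i] \<open>m < 4\<close> \<open>m' < 4\<close>
    by (simp add: \<open>i = j\<close> funpow_less_4 nth_eq_iff_index_eq)
  ultimately show "i = j \<and> m = m'"
    by simp
qed

lemma loop_dart_not_fixed:
  assumes "i < length ls" "m < 4"
  shows "\<sigma> (loop_dart (i, m)) \<noteq> loop_dart (i, m)"
proof -
  have "m = 0 \<or> m = 1 \<or> m = 2 \<or> m = 3"
    using assms(2) by linarith
  then show ?thesis
    using crossing_rotation[OF assms(1)] by (auto simp: numeral_eq_Suc)
qed

lemma q_eq: "q = \<sigma> (\<sigma> (ls ! 0))"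
  using p_eq self_crossing(4) by simp

lemma \<sigma>_image_set_eq: "\<sigma> ` set ls = (\<lambda>i. \<sigma> (ls ! i)) ` {..<length ls}"
  by (auto simp: in_set_conv_nth intro!: imageI)

lemma sprouts_eq_insert: "sprouts = insert q (\<sigma> ` set ls)"
proof -
  have "{..<length ls} = insert 0 {1..<length ls}"
    using ls_nonempty by auto
  then have "\<sigma> ` set ls = insert p ((\<lambda>i. \<sigma> (ls ! i)) ` {1..<length ls})"
    unfolding \<sigma>_image_set_eq p_eq by simp
  moreover have "{\<sigma> (ls ! i) |i. 1 \<le> i \<and> i < length ls} = (\<lambda>i. \<sigma> (ls ! i)) ` {1..<length ls}"
    by auto
  ultimately show ?thesis
    unfolding sprout_darts_def by auto
qed

lemma sprouts_eq_loop_darts: "sprouts = loop_dart ` insert (0, 2) ({..<length ls} \<times> {1})"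
proof -
  have "loop_dart ` ({..<length ls} \<times> {1}) = (\<lambda>i. \<sigma> (ls ! i)) ` {..<length ls}"
    by force
  moreover have "loop_dart (0, 2) = q"
    by (simp add: q_eq numeral_eq_Suc)
  ultimately show ?thesis
    unfolding sprouts_eq_insert \<sigma>_image_set_eq by simp
qed

lemma \<alpha>_nth_in_loop_darts:
  assumes "j < length ls"
  shows "\<alpha> (ls ! j) \<in> loop_dart ` insert (0, 3) ({1..<length ls} \<times> {2})"
proof (cases "j = length ls - 1")
  case True
  then have "\<alpha> (ls ! j) = loop_dart (0, 3)"
    using \<alpha>_last_eq by (simp add: numeral_eq_Suc)
  then show ?thesis
    by blast
next
  case False
  then have "\<alpha> (ls ! j) = loop_dart (j + 1, 2)" "j + 1 \<in> {1..<length ls}"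
    using assms \<sigma>_\<sigma>_nth[of "j + 1"] by (auto simp: numeral_eq_Suc)
  then show ?thesis
    by blast
qed

lemma loop_dart_in_\<alpha>_image:
  assumes "x \<in> insert (0, 3) ({1..<length ls} \<times> {2})"
  shows "loop_dart x \<in> \<alpha> ` set ls"
proof -
  consider "x = (0, 3)" | i where "i \<in> {1..<length ls}" "x = (i, 2)"
    using assms by blast
  then obtain j where "j < length ls" "loop_dart x = \<alpha> (ls ! j)"
  proof cases
    case 1
    then show thesis
      using that[of "length ls - 1"] \<alpha>_last_eq ls_nonempty by (simp add: numeral_eq_Suc)
  next
    case (2 i)
    then have "i - 1 < length ls" "loop_dart x = \<alpha> (ls ! (i - 1))"
      using \<sigma>_\<sigma>_nth[of i] by (auto simp: numeral_eq_Suc)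
    then show thesis
      by (rule that)
  qed
  then show ?thesis
    by simp
qed

lemma \<alpha>_image_set_eq: "\<alpha> ` set ls = loop_dart ` insert (0, 3) ({1..<length ls} \<times> {2})"
proof (rule equalityI)
  show "\<alpha> ` set ls \<subseteq> loop_dart ` insert (0, 3) ({1..<length ls} \<times> {2})"
  proof (rule image_subsetI)
    fix l
    assume "l \<in> set ls"
    then obtain j where "j < length ls" "l = ls ! j"
      by (auto simp: in_set_conv_nth)
    then show "\<alpha> l \<in> loop_dart ` insert (0, 3) ({1..<length ls} \<times> {2})"
      using \<alpha>_nth_in_loop_darts by simp
  qed
  show "loop_dart ` insert (0, 3) ({1..<length ls} \<times> {2}) \<subseteq> \<alpha> ` set ls"
    using loop_dart_in_\<alpha>_image by blast
qed

lemma card_sprouts: "card sprouts = length ls + 1"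
proof -
  have "card sprouts = card (insert (0, 2) ({..<length ls} \<times> {1::nat}))"
    unfolding sprouts_eq_loop_darts using ls_nonempty
    by (intro card_image inj_on_subset[OF inj_on_loop_dart]) auto
  then show ?thesis
    by (simp add: card_cartesian_product)
qed

lemma sprouts_Un_\<alpha>_image_eq:
  "sprouts \<union> \<alpha> ` set ls = loop_dart ` insert (0, 3) ({..<length ls} \<times> {1, 2})"
proof -
  have "insert (0, 2) ({..<length ls} \<times> {1}) \<union> insert (0, 3) ({1..<length ls} \<times> {2})
        = insert (0, 3) ({..<length ls} \<times> {1, 2::nat})"
    using ls_nonempty by auto
  then show ?thesis
    unfolding sprouts_eq_loop_darts \<alpha>_image_set_eq image_Un[symmetric] by simp
qed

lemma card_sprouts_Un_\<alpha>_image: "card (sprouts \<union> \<alpha> ` set ls) = 2 * length ls + 1"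
proof -
  have "card (loop_dart ` insert (0, 3) ({..<length ls} \<times> {1, 2}))
      = card (insert (0, 3) ({..<length ls} \<times> {1, 2::nat}))"
    using ls_nonempty by (intro card_image inj_on_subset[OF inj_on_loop_dart]) auto
  then show ?thesis
    unfolding sprouts_Un_\<alpha>_image_eq by (simp add: card_cartesian_product)
qed

lemma sprouts_Un_\<alpha>_image_not_fixed:
  assumes "d \<in> sprouts \<union> \<alpha> ` set ls"
  shows "\<sigma> d \<noteq> d"
proof -
  obtain i m where im: "(i, m) \<in> insert (0, 3) ({..<length ls} \<times> {1, 2})" "d = loop_dart (i, m)"
    using assms unfolding sprouts_Un_\<alpha>_image_eq by blast
  then have "i < length ls" "m < 4"
    using ls_nonempty by auto
  then show ?thesis
    unfolding im(2) by (rule loop_dart_not_fixed)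
qed

lemma sprout_end_fixed: "s \<in> sprouts \<Longrightarrow> \<sigma> (\<alpha> s) = \<alpha> s"
  unfolding sprout_darts_def using self_crossing(6,7) crossing_on_loop(4) by auto

lemma sprouts_subset: "sprouts \<subseteq> D"
  unfolding sprouts_eq_insert using q_in ls_subset bij_betwE[OF bij_\<sigma>] by auto

lemma leaves_eq: "{d \<in> D. \<sigma> d = d} = \<alpha> ` sprouts"
proof (rule equalityI; rule subsetI)
  fix d
  assume "d \<in> {d \<in> D. \<sigma> d = d}"
  then have "d \<in> D" "\<alpha> d \<in> sprouts"
    using leaf_sprout by auto
  then show "d \<in> \<alpha> ` sprouts"
    using \<alpha>_\<alpha> by (metis image_eqI)
next
  fix d
  assume "d \<in> \<alpha> ` sprouts"
  then show "d \<in> {d \<in> D. \<sigma> d = d}"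
    using sprout_end_fixed sprouts_subset bij_betwE[OF bij_\<alpha>] by auto
qed

lemma card_\<alpha>_sprouts: "card (\<alpha> ` sprouts) = length ls + 1"
  using card_image[OF inj_on_subset[OF bij_betw_imp_inj_on[OF bij_\<alpha>] sprouts_subset]] card_sprouts
  by simp

lemma card_leaves: "card {d \<in> D. \<sigma> d = d} = length ls + 1"
  unfolding leaves_eq by (rule card_\<alpha>_sprouts)

(* The boundary walk of the face of p passes each sprout s on both sides (s and \<alpha> s)
   and each loop edge on its outer side (\<alpha> l for l in ls). *)
definition outer_face :: "'d set" where
  "outer_face = \<alpha> ` sprouts \<union> (sprouts \<union> \<alpha> ` set ls)"

lemma card_outer_face: "card outer_face = 3 * length ls + 2"
proof -
  have "finite sprouts"
    using finite_subset[OF sprouts_subset finite_darts] .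
  moreover have "\<alpha> ` sprouts \<inter> (sprouts \<union> \<alpha> ` set ls) = {}"
    using sprout_end_fixed sprouts_Un_\<alpha>_image_not_fixed by fastforce
  ultimately have "card outer_face = card (\<alpha> ` sprouts) + card (sprouts \<union> \<alpha> ` set ls)"
    unfolding outer_face_def by (intro card_Un_disjoint) auto
  then show ?thesis
    using card_\<alpha>_sprouts card_sprouts_Un_\<alpha>_image by simp
qed


lemma \<sigma>_sprout_in: "s \<in> sprouts \<Longrightarrow> \<sigma> s \<in> sprouts \<union> \<alpha> ` set ls"
proof -
  assume "s \<in> sprouts"
  then consider "s = q" | i where "i < length ls" "s = \<sigma> (ls ! i)"
    unfolding sprouts_eq_insert by (auto simp: in_set_conv_nth)
  then show ?thesis
  proof cases
    case 1
    then show ?thesis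
      using self_crossing(5) ls_nonempty by simp
  next
    case (2 i)
    show ?thesis
    proof (cases "i = 0")
      case True
      then show ?thesis
        using 2 q_eq unfolding sprouts_eq_insert by simp
    next
      case False
      then have "\<sigma> s = \<alpha> (ls ! (i - 1))" "ls ! (i - 1) \<in> set ls"
        using 2 \<sigma>_\<sigma>_nth[of i] by auto
      then show ?thesis
        by simp
    qed
  qed
qed

lemma outer_face_closed:
  assumes "x \<in> outer_face"
  shows "\<sigma> (\<alpha> x) \<in> outer_face"
  using assms unfolding outer_face_def
proof (elim UnE imageE)
  fix s
  assume s: "s \<in> sprouts" and "x = \<alpha> s"
  then have "\<sigma> (\<alpha> x) = \<sigma> s"
    using \<alpha>_\<alpha> sprouts_subset by auto
  then show "\<sigma> (\<alpha> x) \<in> \<alpha> ` sprouts \<union> (sprouts \<union> \<alpha> ` set ls)"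
    using \<sigma>_sprout_in[OF s] by simp
next
  assume "x \<in> sprouts"
  then show "\<sigma> (\<alpha> x) \<in> \<alpha> ` sprouts \<union> (sprouts \<union> \<alpha> ` set ls)"
    using sprout_end_fixed by simp
next
  fix l
  assume "l \<in> set ls" "x = \<alpha> l"
  then show "\<sigma> (\<alpha> x) \<in> \<alpha> ` sprouts \<union> (sprouts \<union> \<alpha> ` set ls)"
    using \<alpha>_\<alpha> ls_subset unfolding sprouts_eq_insert by auto
qed

lemma \<alpha>_sprout_in_face:
  assumes "s \<in> sprouts" "s \<in> orb (\<sigma> \<circ> \<alpha>) y"
  shows "\<alpha> s \<in> orb (\<sigma> \<circ> \<alpha>) y"
  using orb_step[OF assms(2)] sprout_end_fixed[OF assms(1)] by simp

lemma \<sigma>_loop_in_face: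
  assumes "l \<in> set ls" "\<alpha> l \<in> orb (\<sigma> \<circ> \<alpha>) y"
  shows "\<sigma> l \<in> orb (\<sigma> \<circ> \<alpha>) y"
  using orb_step[OF assms(2)] \<alpha>_\<alpha> ls_subset assms(1) by auto

lemma q_in_face: "q \<in> orb (\<sigma> \<circ> \<alpha>) p"
proof -
  have "p \<in> sprouts"
    unfolding sprout_darts_def by simp
  then have "\<alpha> p \<in> orb (\<sigma> \<circ> \<alpha>) p"
    using \<alpha>_sprout_in_face self_in_orb by metis
  then show ?thesis
    using orb_step \<alpha>_\<alpha>[OF p_in] self_crossing(4) by (metis comp_apply)
qed

lemma \<alpha>_last_in_face: "\<alpha> (last ls) \<in> orb (\<sigma> \<circ> \<alpha>) p"
proof -
  have "q \<in> sprouts"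
    unfolding sprout_darts_def by simp
  then have "\<alpha> q \<in> orb (\<sigma> \<circ> \<alpha>) p"
    using \<alpha>_sprout_in_face q_in_face by metis
  then show ?thesis
    using orb_step \<alpha>_\<alpha>[OF q_in] self_crossing(5) by (metis comp_apply)
qed

lemma \<alpha>_nth_in_face:
  assumes "j < length ls"
  shows "\<alpha> (ls ! j) \<in> orb (\<sigma> \<circ> \<alpha>) p"
proof -
  have "j \<le> length ls - 1"
    using assms by simp
  then show ?thesis
  proof (induction rule: inc_induct)
    case base
    show ?case
      using \<alpha>_last_in_face last_conv_nth[OF ls_nonempty] by metis
  next
    \<comment> \<open>the walk goes from \<open>\<alpha> (ls ! Suc n)\<close> around the sprout at \<open>ls ! Suc n\<close> to \<open>\<alpha> (ls ! n)\<close>\<close>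
    case (step n)
    then have n: "1 \<le> Suc n" "Suc n < length ls"
      by simp_all
    let ?l = "ls ! Suc n"
    have "\<sigma> ?l \<in> orb (\<sigma> \<circ> \<alpha>) p"
      using \<sigma>_loop_in_face[OF nth_mem[OF n(2)] step.IH] .
    moreover have "\<sigma> ?l \<in> sprouts"
      unfolding sprouts_eq_insert using nth_mem[OF n(2)] by simp
    ultimately have "\<alpha> (\<sigma> ?l) \<in> orb (\<sigma> \<circ> \<alpha>) p"
      by (rule \<alpha>_sprout_in_face[rotated])
    then have "\<sigma> (\<sigma> ?l) \<in> orb (\<sigma> \<circ> \<alpha>) p"
      using orb_step \<alpha>_\<alpha> bij_betwE[OF bij_\<sigma>] ls_nth_in[OF n(2)] by (metis comp_apply)
    then show ?case
      using \<sigma>_\<sigma>_nth[OF n] by (simp add: comp_def)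
  qed
qed

lemma outer_face_subset_orb: "outer_face \<subseteq> orb (\<sigma> \<circ> \<alpha>) p"
proof -
  have \<alpha>_loop: "\<alpha> l \<in> orb (\<sigma> \<circ> \<alpha>) p" if "l \<in> set ls" for l
    using that \<alpha>_nth_in_face by (auto simp: in_set_conv_nth)
  have sprouts_in: "sprouts \<subseteq> orb (\<sigma> \<circ> \<alpha>) p"
    unfolding sprouts_eq_insert using q_in_face \<sigma>_loop_in_face[of _ p] \<alpha>_loop by blast
  then have "\<alpha> ` sprouts \<subseteq> orb (\<sigma> \<circ> \<alpha>) p"
    using \<alpha>_sprout_in_face[of _ p] by blast
  then show ?thesis
    unfolding outer_face_def using sprouts_in \<alpha>_loop by blast
qed

lemma orb_p_eq_outer_face: "orb (\<sigma> \<circ> \<alpha>) p = outer_face"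
proof (rule equalityI)
  have "((\<sigma> \<circ> \<alpha>) ^^ n) p \<in> outer_face" for n
  proof (induction n)
    case 0
    show ?case
      unfolding outer_face_def sprout_darts_def by simp
  next
    case (Suc n)
    then show ?case
      using outer_face_closed by simp
  qed
  then show "orb (\<sigma> \<circ> \<alpha>) p \<subseteq> outer_face"
    unfolding orb_def by blast
qed (rule outer_face_subset_orb)

lemma faces_in_R_eq: "faces_in_R D \<alpha> \<sigma> ls p q = map_faces D \<alpha> \<sigma> - {outer_face}"
proof -
  have "F \<inter> sprouts = {} \<longleftrightarrow> F \<noteq> outer_face" if face: "F \<in> map_faces D \<alpha> \<sigma>" for F
  proof
    assume "F \<inter> sprouts = {}"
    moreover have "p \<in> sprouts" "p \<in> outer_face"
      unfolding outer_face_def sprout_darts_def by simp_all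
    ultimately show "F \<noteq> outer_face"
      by blast
  next
    assume F: "F \<noteq> outer_face"
    obtain d where d: "d \<in> D" "F = orb (\<sigma> \<circ> \<alpha>) d"
      using face unfolding map_faces_def by blast
    show "F \<inter> sprouts = {}"
    proof (rule ccontr)
      assume "F \<inter> sprouts \<noteq> {}"
      then obtain s where "s \<in> F" "s \<in> outer_face"
        unfolding outer_face_def by blast
      then have "orb (\<sigma> \<circ> \<alpha>) s = F" "orb (\<sigma> \<circ> \<alpha>) s = outer_face"
        using orb_eq[OF finite_darts bij_betw_face_permutation[OF is_map]] d p_in orb_p_eq_outer_face
        by metis+
      with F show False
        by simp
    qed
  qed
  then show ?thesis
    unfolding faces_in_R_def by blast
qed

lemma sum_four_minus_inner_face_sizes:
  "(\<Sum>F\<in>faces_in_R D \<alpha> \<sigma> ls p q. 4 - real (card F)) = 3"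
proof -
  have "outer_face \<in> map_faces D \<alpha> \<sigma>"
    unfolding map_faces_def orb_p_eq_outer_face[symmetric] using p_in by blast
  then show ?thesis
    unfolding faces_in_R_eq
    using planar_map_sum_four_minus_face_sizes[OF planar degrees] card_outer_face card_leaves
    by simp
qed

lemma finite_faces_in_R: "finite (faces_in_R D \<alpha> \<sigma> ls p q)"
  unfolding faces_in_R_eq map_faces_def using finite_darts by simp

lemma card_face_in_R_nonzero: "F \<in> faces_in_R D \<alpha> \<sigma> ls p q \<Longrightarrow> card F \<noteq> 0"
  unfolding faces_in_R_def using card_map_face_nonzero[OF is_map] by blast

end

theorem theorem5p11:
  fixes D :: "'d set" and \<alpha> \<sigma> :: "'d \<Rightarrow> 'd" and ls :: "'d list" and p q :: 'd
  assumes "loop_tangle_map D \<alpha> \<sigma> ls p q"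
  defines "f \<equiv> \<lambda>N. real (nsided_faces D \<alpha> \<sigma> ls p q N)"
  shows "3 * f 1 + 2 * f 2 + f 3 = 3 + (\<Sum>n. real (n + 1) * f (n + 1 + 4))"
proof -
  interpret loop_tangle D \<alpha> \<sigma> ls p q
    using assms(1) by unfold_locales
  have "3 = 3 * f 1 + 2 * f 2 + f 3 - (\<Sum>n. real (n + 1) * f (n + 1 + 4))"
    using sum_four_minus_eq_series[where c = card, OF finite_faces_in_R card_face_in_R_nonzero]
    unfolding sum_four_minus_inner_face_sizes f_def nsided_faces_def .
  then show ?thesis
    by simp
qed

end
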